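(* Let $M$ be a connected surface with null coordinates $(u,v)$ and $\varphi:M\to\mathbb{H}^3_1(-1)$ a conformal timelike immersion with unit normal field $N$. Then the map $\varphi+N:M\to\mathbb{N}$ (hyperbolic Gauss map) is conformal, i.e. $\langle d(\varphi+N),d(\varphi+N)\rangle=\lambda\,\langle d\varphi,d\varphi\rangle$ for some function $\lambda:M\to\mathbb{R}$, if and only if either $H\equiv1$ on $M$ or $\varphi$ is totally umbilic ($Q\equiv R\equiv0$). Likewise, $\varphi-N$ is conformal if and only if $H\equiv-1$ or $\varphi$ is totally umbilic.
   Context: $\mathbb{E}^4_2$ is $\mathbb{R}^4$ with metric $\langle\cdot,\cdot\rangle=-(dx_0)^2-(dx_1)^2+(dx_2)^2+(dx_3)^2$; $\mathbb{H}^3_1(-1)=\{x:\langle x,x\rangle=-1\}$; $\mathbb{N}=\{x\in\mathbb{E}^4_2:\langle x,x\rangle=0\}$ the null cone. Conformal timelike immersion in null coordinates: $\langle\varphi_u,\varphi_u\rangle=\langle\varphi_v,\varphi_v\rangle=0$, $\langle\varphi_u,\varphi_v\rangle=\tfrac12e^{\omega}$. Unit normal: $\langle N,N\rangle=1$, $N\perp\varphi,\varphi_u,\varphi_v$. Mean curvature $H=2e^{-\omega}\langle\varphi_{uv},N\rangle$; Hopf pairs $Q=\langle\varphi_{uu},N\rangle$, $R=\langle\varphi_{vv},N\rangle$; totally umbilic means $Q=R=0$ everywhere. *)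

theory Defs
  imports "HOL-Analysis.Analysis"
begin

text \<open>Points of E^4_2 are vectors in real^4; components 1,2,3,4 play the role of x0,x1,x2,x3.\<close>

definition lor :: "real^4 \<Rightarrow> real^4 \<Rightarrow> real" where
  "lor x y = - x$1 * y$1 - x$2 * y$2 + x$3 * y$3 + x$4 * y$4"

definition H31 :: "(real^4) set" where "H31 = {x. lor x x = -1}"
definition nullcone :: "(real^4) set" where "nullcone = {x. lor x x = 0}"

definition fform :: "real^4 \<Rightarrow> real^4 \<Rightarrow> real \<Rightarrow> real \<Rightarrow> real" where
  "fform Xu Xv a b = lor (a *\<^sub>R Xu + b *\<^sub>R Xv) (a *\<^sub>R Xu + b *\<^sub>R Xv)"

definition conformal_rel ::
  "(real\<times>real) set \<Rightarrow> (real\<times>real \<Rightarrow> real^4) \<Rightarrow> (real\<times>real \<Rightarrow> real^4)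
     \<Rightarrow> (real\<times>real \<Rightarrow> real^4) \<Rightarrow> (real\<times>real \<Rightarrow> real^4) \<Rightarrow> bool" where
  "conformal_rel U Yu Yv Xu Xv \<longleftrightarrow>
     (\<exists>lam :: real\<times>real \<Rightarrow> real. \<forall>p\<in>U. \<forall>a b.
        fform (Yu p) (Yv p) a b = lam p * fform (Xu p) (Xv p) a b)"

end

theory Submission
  imports Defs
begin

(*
  In the null frame (\<phi>, \<phi>\<^sub>u, \<phi>\<^sub>v, N) the Weingarten equations read
  N\<^sub>u = -H \<phi>\<^sub>u - (2Q/e\<^sup>\<omega>) \<phi>\<^sub>v and N\<^sub>v = -(2R/e\<^sup>\<omega>) \<phi>\<^sub>u - H \<phi>\<^sub>v.
  Hence for c \<noteq> 0 the partials of \<phi> + cN have Lorentzian squares -2c(1 - cH)Q and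
  -2c(1 - cH)R, and since \<phi>\<^sub>u, \<phi>\<^sub>v are null, \<phi> + cN is conformal exactly when at every
  point H = 1/c or Q = R = 0 (c = \<plusminus>1 gives the two hyperbolic Gauss maps).

  The global dichotomy on a connected domain follows once H is known to be locally constant on
  every open umbilic set, where dN = -H d\<phi>. Since H is only continuous, this is shown without
  differentiating H: in local coordinates given by a planar projection of \<phi> (inverse function
  theorem) the same projection of N has differential -H times the identity, and a plane map whose
  differential is everywhere a scalar multiple of the identity has a locally constant scalar,
  because that scalar is a partial derivative of each component in one variable while the other
  partial vanishes.
*)

section \<open>The Lorentzian form\<close>

lemma lor_sym: "lor x y = lor y x"
  by (simp add: lor_def algebra_simps)

lemma bounded_bilinear_lor: "bounded_bilinear lor"
proof -
  have "bilinear lor"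
    unfolding bilinear_def by (auto intro!: linearI simp: lor_def algebra_simps)
  then show ?thesis
    by (rule bilinear_conv_bounded_bilinear[THEN iffD1])
qed

interpretation lor: bounded_bilinear lor
  by (rule bounded_bilinear_lor)

lemmas lor_linear_simps = lor.add_left lor.add_right lor.diff_left lor.diff_right
  lor.scaleR_left lor.scaleR_right lor.minus_left lor.minus_right lor.zero_left lor.zero_right

lemma fform_expand: "fform A B a b = a * a * lor A A + 2 * a * b * lor A B + b * b * lor B B"
  unfolding fform_def by (simp add: lor_linear_simps lor_sym[of B A] algebra_simps)

lemma conformal_rel_iff_null:
  assumes "\<And>p. p \<in> U \<Longrightarrow> lor (Xu p) (Xu p) = 0" "\<And>p. p \<in> U \<Longrightarrow> lor (Xv p) (Xv p) = 0"
    and "\<And>p. p \<in> U \<Longrightarrow> lor (Xu p) (Xv p) \<noteq> 0"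
  shows "conformal_rel U Yu Yv Xu Xv \<longleftrightarrow> (\<forall>p\<in>U. lor (Yu p) (Yu p) = 0 \<and> lor (Yv p) (Yv p) = 0)"
proof
  assume "conformal_rel U Yu Yv Xu Xv"
  then obtain lam where "\<And>p a b. p \<in> U \<Longrightarrow> fform (Yu p) (Yv p) a b = lam p * fform (Xu p) (Xv p) a b"
    unfolding conformal_rel_def by blast
  from this[of _ 1 0] this[of _ 0 1] assms
  show "\<forall>p\<in>U. lor (Yu p) (Yu p) = 0 \<and> lor (Yv p) (Yv p) = 0"
    by (simp add: fform_expand)
next
  assume "\<forall>p\<in>U. lor (Yu p) (Yu p) = 0 \<and> lor (Yv p) (Yv p) = 0"
  with assms show "conformal_rel U Yu Yv Xu Xv"
    unfolding conformal_rel_def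
    by (intro exI[of _ "\<lambda>p. lor (Yu p) (Yv p) / lor (Xu p) (Xv p)"]) (auto simp: fform_expand)
qed

lemma lor_frame_expansion:
  fixes a b c d z :: "real^4"
  assumes "lor a a = -1" "lor a b = 0" "lor a c = 0" "lor a d = 0"
    and "lor b b = 0" "lor c c = 0" "lor b c = s" "s \<noteq> 0" "lor b d = 0" "lor c d = 0" "lor d d = 1"
  shows "z = (- lor z a) *\<^sub>R a + (lor z c / s) *\<^sub>R b + (lor z b / s) *\<^sub>R c + lor z d *\<^sub>R d"
proof -
  define coords :: "real^4 \<Rightarrow> real^4" where
    "coords x = (\<chi> i. if i = 1 then lor x a else if i = 2 then lor x b else if i = 3 then lor x c else lor x d)"
    for x
  note frame = assms lor_sym[of b a] lor_sym[of c a] lor_sym[of d a] lor_sym[of c b]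
    lor_sym[of d b] lor_sym[of d c]
  have "linear coords"
    unfolding coords_def by (rule linearI) (auto simp: vec_eq_iff forall_4 lor_linear_simps)
  moreover have "surj coords"
  proof (rule surjI)
    fix y :: "real^4"
    show "coords ((- y$1) *\<^sub>R a + (y$3 / s) *\<^sub>R b + (y$2 / s) *\<^sub>R c + y$4 *\<^sub>R d) = y"
      using frame by (simp add: coords_def vec_eq_iff forall_4 lor_linear_simps)
  qed
  ultimately have "inj coords"
    by (simp add: linear_surjective_imp_injective)
  then show ?thesis
    by (rule injD) (use frame in \<open>simp add: coords_def vec_eq_iff forall_4 lor_linear_simps\<close>)
qed

lemma has_derivative_lor:
  assumes "(F has_derivative (\<lambda>h. fst h *\<^sub>R Fu + snd h *\<^sub>R Fv)) (at p)"
    and "(G has_derivative (\<lambda>h. fst h *\<^sub>R Gu + snd h *\<^sub>R Gv)) (at p)"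
  shows "((\<lambda>q. lor (F q) (G q)) has_derivative
           (\<lambda>h. fst h * (lor Fu (G p) + lor (F p) Gu) + snd h * (lor Fv (G p) + lor (F p) Gv))) (at p)"
  by (rule has_derivative_eq_rhs[OF lor.FDERIV[OF assms]])
    (auto simp: fun_eq_iff lor_linear_simps algebra_simps)

lemma lor_const_partials:
  assumes "open U" "p \<in> U" and const: "\<And>q. q \<in> U \<Longrightarrow> lor (F q) (G q) = c"
    and "(F has_derivative (\<lambda>h. fst h *\<^sub>R Fu + snd h *\<^sub>R Fv)) (at p)"
    and "(G has_derivative (\<lambda>h. fst h *\<^sub>R Gu + snd h *\<^sub>R Gv)) (at p)"
  shows "lor Fu (G p) + lor (F p) Gu = 0" "lor Fv (G p) + lor (F p) Gv = 0"
proof -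
  have "((\<lambda>q. lor (F q) (G q)) has_derivative (\<lambda>h. 0)) (at p)"
    by (rule has_derivative_transform_within_open[OF has_derivative_const \<open>open U\<close> \<open>p \<in> U\<close>])
      (simp add: const)
  from has_derivative_unique[OF has_derivative_lor[OF assms(4,5)] this]
  have "\<And>h. fst h * (lor Fu (G p) + lor (F p) Gu) + snd h * (lor Fv (G p) + lor (F p) Gv) = 0"
    by metis
  from this[of "(1, 0)"] this[of "(0, 1)"]
  show "lor Fu (G p) + lor (F p) Gu = 0" "lor Fv (G p) + lor (F p) Gv = 0"
    by simp_all
qed

section \<open>Calculus in the plane\<close>

lemma has_real_derivative_partial_fst:
  fixes f :: "real \<times> real \<Rightarrow> real"
  assumes "(f has_derivative (\<lambda>h. fst h * a + snd h * b)) (at (x, y))"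
  shows "((\<lambda>s. f (s, y)) has_real_derivative a) (at x)"
proof -
  have "((\<lambda>s. (s, y)) has_derivative (\<lambda>h. (h, 0))) (at x)"
    by (auto intro!: derivative_eq_intros)
  from has_derivative_compose[OF this assms] show ?thesis
    unfolding has_field_derivative_def by (rule has_derivative_eq_rhs) (auto simp: fun_eq_iff)
qed

lemma has_real_derivative_partial_snd:
  fixes f :: "real \<times> real \<Rightarrow> real"
  assumes "(f has_derivative (\<lambda>h. fst h * a + snd h * b)) (at (x, y))"
  shows "((\<lambda>t. f (x, t)) has_real_derivative b) (at y)"
proof -
  have "((\<lambda>t. (x, t)) has_derivative (\<lambda>h. (0, h))) (at y)"
    by (auto intro!: derivative_eq_intros)
  from has_derivative_compose[OF this assms] show ?thesis
    unfolding has_field_derivative_def by (rule has_derivative_eq_rhs) (auto simp: fun_eq_iff)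
qed

lemma mixed_difference_mean_value:
  fixes f g g' :: "real \<Rightarrow> real \<Rightarrow> real"
  assumes "0 < h" "0 < k"
    and dg: "\<And>s t. s \<in> {x..x+h} \<Longrightarrow> t \<in> {y..y+k} \<Longrightarrow> ((\<lambda>s. f s t) has_real_derivative g s t) (at s)"
    and dg': "\<And>s t. s \<in> {x..x+h} \<Longrightarrow> t \<in> {y..y+k} \<Longrightarrow> ((\<lambda>t. g s t) has_real_derivative g' s t) (at t)"
  obtains s t where "s \<in> {x<..<x+h}" "t \<in> {y<..<y+k}"
    "f (x+h) (y+k) - f (x+h) y - f x (y+k) + f x y = h * k * g' s t"
proof -
  have "\<exists>s. x < s \<and> s < x + h \<and>
      (f (x+h) (y+k) - f (x+h) y) - (f x (y+k) - f x y) = (x + h - x) * (g s (y+k) - g s y)"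
    using \<open>0 < h\<close> \<open>0 < k\<close> by (intro MVT2) (auto intro!: DERIV_diff dg)
  then obtain s where s: "x < s" "s < x + h"
    and "(f (x+h) (y+k) - f (x+h) y) - (f x (y+k) - f x y) = h * (g s (y+k) - g s y)"
    by auto
  moreover have "\<exists>t. y < t \<and> t < y + k \<and> g s (y+k) - g s y = (y + k - y) * g' s t"
    using \<open>0 < k\<close> s by (intro MVT2) (auto intro!: dg')
  then obtain t where "y < t" "t < y + k" "g s (y+k) - g s y = k * g' s t"
    by auto
  ultimately show thesis
    using that[of s t] by (auto simp: algebra_simps)
qed

lemma mixed_partials_agree_nearby:
  fixes f fu fv fuu fuv fvu fvv :: "real \<times> real \<Rightarrow> real"
  assumes df: "\<And>q. q \<in> U \<Longrightarrow> (f has_derivative (\<lambda>h. fst h * fu q + snd h * fv q)) (at q)"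
    and dfu: "\<And>q. q \<in> U \<Longrightarrow> (fu has_derivative (\<lambda>h. fst h * fuu q + snd h * fuv q)) (at q)"
    and dfv: "\<And>q. q \<in> U \<Longrightarrow> (fv has_derivative (\<lambda>h. fst h * fvu q + snd h * fvv q)) (at q)"
    and "0 < r" and ball: "\<And>q. dist q p < r \<Longrightarrow> q \<in> U"
  shows "\<exists>q1 q2. dist q1 p < r \<and> dist q2 p < r \<and> fuv q1 = fvu q2"
proof -
  obtain x y where p: "p = (x, y)"
    by (cases p)
  define h where "h = r / 3"
  have "0 < h"
    using \<open>0 < r\<close> by (simp add: h_def)
  have near: "dist (s, t) p < r" if "s \<in> {x..x+h}" "t \<in> {y..y+h}" for s t
  proof -
    have "dist (s, t) p \<le> dist s x + dist t y"
      using norm_Pair_le[of "s - x" "t - y"] by (simp add: p dist_norm)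
    also have "\<dots> < r"
      using that \<open>0 < r\<close> by (simp add: h_def dist_real_def)
    finally show ?thesis .
  qed
  obtain s1 t1 where st1: "s1 \<in> {x<..<x+h}" "t1 \<in> {y<..<y+h}"
    "f (x+h, y+h) - f (x+h, y) - f (x, y+h) + f (x, y) = h * h * fuv (s1, t1)"
    by (rule mixed_difference_mean_value[of h h x y "\<lambda>s t. f (s, t)" "\<lambda>s t. fu (s, t)"])
      (use \<open>0 < h\<close> near ball in
        \<open>auto intro: has_real_derivative_partial_fst[OF df] has_real_derivative_partial_snd[OF dfu]\<close>)
  obtain t2 s2 where st2: "t2 \<in> {y<..<y+h}" "s2 \<in> {x<..<x+h}"
    "f (x+h, y+h) - f (x, y+h) - f (x+h, y) + f (x, y) = h * h * fvu (s2, t2)"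
    by (rule mixed_difference_mean_value[of h h y x "\<lambda>t s. f (s, t)" "\<lambda>t s. fv (s, t)"])
      (use \<open>0 < h\<close> near ball in
        \<open>auto intro: has_real_derivative_partial_snd[OF df] has_real_derivative_partial_fst[OF dfv]\<close>)
  have "fuv (s1, t1) = fvu (s2, t2)"
    using st1(3) st2(3) \<open>0 < h\<close> by (simp add: algebra_simps)
  moreover have "dist (s1, t1) p < r" "dist (s2, t2) p < r"
    using st1 st2 by (auto intro!: near)
  ultimately show ?thesis
    by blast
qed

lemma mixed_partials_eq:
  fixes f fu fv fuu fuv fvu fvv :: "real \<times> real \<Rightarrow> real"
  assumes "open U" "p \<in> U"
    and df: "\<And>q. q \<in> U \<Longrightarrow> (f has_derivative (\<lambda>h. fst h * fu q + snd h * fv q)) (at q)"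
    and dfu: "\<And>q. q \<in> U \<Longrightarrow> (fu has_derivative (\<lambda>h. fst h * fuu q + snd h * fuv q)) (at q)"
    and dfv: "\<And>q. q \<in> U \<Longrightarrow> (fv has_derivative (\<lambda>h. fst h * fvu q + snd h * fvv q)) (at q)"
    and "continuous_on U fuv" "continuous_on U fvu"
  shows "fuv p = fvu p"
proof (rule ccontr)
  assume "fuv p \<noteq> fvu p"
  define \<epsilon> where "\<epsilon> = \<bar>fuv p - fvu p\<bar> / 2"
  have "0 < \<epsilon>"
    using \<open>fuv p \<noteq> fvu p\<close> by (simp add: \<epsilon>_def)
  have "isCont fuv p" "isCont fvu p"
    using assms(1,2,6,7) continuous_on_eq_continuous_at by blast+
  then have "\<forall>\<^sub>F q in nhds p. q \<in> U \<and> dist (fuv q) (fuv p) < \<epsilon> \<and> dist (fvu q) (fvu p) < \<epsilon>"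
    using \<open>0 < \<epsilon>\<close> assms(1,2)
    by (intro eventually_conj eventually_nhds_in_open tendstoD)
      (auto simp: isCont_def tendsto_at_iff_tendsto_nhds)
  then obtain r where "0 < r"
    and r: "\<And>q. dist q p < r \<Longrightarrow> q \<in> U \<and> dist (fuv q) (fuv p) < \<epsilon> \<and> dist (fvu q) (fvu p) < \<epsilon>"
    by (auto simp: eventually_nhds_metric)
  then obtain q1 q2 where "dist q1 p < r" "dist q2 p < r" "fuv q1 = fvu q2"
    using mixed_partials_agree_nearby[OF df dfu dfv] by blast
  with r have "dist (fuv q1) (fuv p) < \<epsilon>" "dist (fvu q2) (fvu p) < \<epsilon>"
    by blast+
  with \<open>fuv q1 = fvu q2\<close> show False
    by (simp add: \<epsilon>_def dist_real_def abs_if split: if_splits)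
qed

lemma mixed_partials_eq_vec:
  fixes f fu fv fuu fuv fvu fvv :: "real \<times> real \<Rightarrow> real^'n"
  assumes "open U" "p \<in> U"
    and df: "\<And>q. q \<in> U \<Longrightarrow> (f has_derivative (\<lambda>h. fst h *\<^sub>R fu q + snd h *\<^sub>R fv q)) (at q)"
    and dfu: "\<And>q. q \<in> U \<Longrightarrow> (fu has_derivative (\<lambda>h. fst h *\<^sub>R fuu q + snd h *\<^sub>R fuv q)) (at q)"
    and dfv: "\<And>q. q \<in> U \<Longrightarrow> (fv has_derivative (\<lambda>h. fst h *\<^sub>R fvu q + snd h *\<^sub>R fvv q)) (at q)"
    and "continuous_on U fuv" "continuous_on U fvu"
  shows "fuv p = fvu p"
proof -
  have component: "((\<lambda>q. g q $ i) has_derivative (\<lambda>h. fst h * gu q $ i + snd h * gv q $ i)) (at q)"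
    if "(g has_derivative (\<lambda>h. fst h *\<^sub>R gu q + snd h *\<^sub>R gv q)) (at q)"
    for g gu gv :: "real \<times> real \<Rightarrow> real^'n" and q i
    using bounded_linear.has_derivative[OF bounded_linear_vec_nth that] by simp
  have "fuv p $ i = fvu p $ i" for i
    using assms(1,2)
    by (rule mixed_partials_eq[where f = "\<lambda>q. f q $ i" and fuu = "\<lambda>q. fuu q $ i" and fvv = "\<lambda>q. fvv q $ i"])
      (auto intro!: component df dfu dfv continuous_on_component assms(6,7))
  then show ?thesis
    by (simp add: vec_eq_iff)
qed

lemma partial_derivative_independent:
  fixes g j :: "real \<Rightarrow> real \<Rightarrow> real"
  assumes "open S" "convex T"
    and dS: "\<And>s t. s \<in> S \<Longrightarrow> t \<in> T \<Longrightarrow> ((\<lambda>s. g s t) has_real_derivative j s t) (at s)"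
    and dT: "\<And>s t. s \<in> S \<Longrightarrow> t \<in> T \<Longrightarrow> ((\<lambda>t. g s t) has_real_derivative 0) (at t)"
    and "s \<in> S" "t \<in> T" "t' \<in> T"
  shows "j s t = j s t'"
proof -
  have "g \<sigma> t = g \<sigma> t'" if \<sigma>: "\<sigma> \<in> S" for \<sigma>
  proof -
    obtain c where "\<forall>\<tau>\<in>T. g \<sigma> \<tau> = c"
      using has_field_derivative_zero_constant[OF \<open>convex T\<close>, of "g \<sigma>"] dT[OF \<sigma>]
      by (auto intro: has_field_derivative_at_within)
    with \<open>t \<in> T\<close> \<open>t' \<in> T\<close> show ?thesis
      by simp
  qed
  then have "((\<lambda>s. g s t') has_real_derivative j s t) (at s)"
    by (intro has_field_derivative_transform_within_open[OF dS \<open>open S\<close>]) (use assms in auto)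
  then show ?thesis
    using dS[OF \<open>s \<in> S\<close> \<open>t' \<in> T\<close>] by (rule DERIV_unique)
qed

lemma scaled_identity_derivative_partials:
  fixes F :: "real \<times> real \<Rightarrow> real \<times> real"
  assumes "(F has_derivative (\<lambda>h. c *\<^sub>R h)) (at (s, t))"
  shows "((\<lambda>s. fst (F (s, t))) has_real_derivative c) (at s)"
    and "((\<lambda>t. fst (F (s, t))) has_real_derivative 0) (at t)"
    and "((\<lambda>s. snd (F (s, t))) has_real_derivative 0) (at s)"
    and "((\<lambda>t. snd (F (s, t))) has_real_derivative c) (at t)"
proof -
  have dfst: "((\<lambda>y. fst (F y)) has_derivative (\<lambda>h. fst h * c + snd h * 0)) (at (s, t))"
    by (rule has_derivative_eq_rhs[OF has_derivative_fst[OF assms]]) auto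
  have dsnd: "((\<lambda>y. snd (F y)) has_derivative (\<lambda>h. fst h * 0 + snd h * c)) (at (s, t))"
    by (rule has_derivative_eq_rhs[OF has_derivative_snd[OF assms]]) auto
  show "((\<lambda>s. fst (F (s, t))) has_real_derivative c) (at s)"
    using has_real_derivative_partial_fst[OF dfst] .
  show "((\<lambda>t. fst (F (s, t))) has_real_derivative 0) (at t)"
    using has_real_derivative_partial_snd[OF dfst] .
  show "((\<lambda>s. snd (F (s, t))) has_real_derivative 0) (at s)"
    using has_real_derivative_partial_fst[OF dsnd] .
  show "((\<lambda>t. snd (F (s, t))) has_real_derivative c) (at t)"
    using has_real_derivative_partial_snd[OF dsnd] .
qed

lemma scaled_identity_derivative_locally_constant:
  fixes F :: "real \<times> real \<Rightarrow> real \<times> real"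
  assumes "open V" "y0 \<in> V"
    and dF: "\<And>y. y \<in> V \<Longrightarrow> (F has_derivative (\<lambda>h. J y *\<^sub>R h)) (at y)"
  shows "\<forall>\<^sub>F y in nhds y0. J y = J y0"
proof -
  obtain a0 b0 where y0: "y0 = (a0, b0)"
    by (cases y0)
  obtain A B where "open A" "open B" "y0 \<in> A \<times> B" "A \<times> B \<subseteq> V"
    by (rule open_prod_elim[OF assms(1,2)])
  then have "a0 \<in> A" "b0 \<in> B"
    by (simp_all add: y0)
  obtain ra where "0 < ra" "ball a0 ra \<subseteq> A"
    using \<open>open A\<close> \<open>a0 \<in> A\<close> open_contains_ball by blast
  obtain rb where "0 < rb" "ball b0 rb \<subseteq> B"
    using \<open>open B\<close> \<open>b0 \<in> B\<close> open_contains_ball by blast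
  define S where "S = ball a0 ra"
  define T where "T = ball b0 rb"
  have box: "S \<times> T \<subseteq> V"
    unfolding S_def T_def using \<open>A \<times> B \<subseteq> V\<close> Sigma_mono[OF \<open>ball a0 ra \<subseteq> A\<close> \<open>ball b0 rb \<subseteq> B\<close>]
    by (rule order_trans[rotated])
  have partials: "((\<lambda>s. fst (F (s, t))) has_real_derivative J (s, t)) (at s)"
      "((\<lambda>t. fst (F (s, t))) has_real_derivative 0) (at t)"
      "((\<lambda>s. snd (F (s, t))) has_real_derivative 0) (at s)"
      "((\<lambda>t. snd (F (s, t))) has_real_derivative J (s, t)) (at t)"
    if "s \<in> S" "t \<in> T" for s t
    using scaled_identity_derivative_partials[OF dF] box that by blast+
  have centres: "a0 \<in> S" "b0 \<in> T"
    using \<open>0 < ra\<close> \<open>0 < rb\<close> by (simp_all add: S_def T_def)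
  have S: "open S" "convex S" and T: "open T" "convex T"
    by (simp_all add: S_def T_def)
  have "J (a, b) = J (a0, b0)" if "a \<in> S" "b \<in> T" for a b
  proof -
    have "J (a, b) = J (a, b0)"
      by (rule partial_derivative_independent[OF S(1) T(2), where g = "\<lambda>s t. fst (F (s, t))"])
        (use partials that centres in auto)
    also have "\<dots> = J (a0, b0)"
      by (rule partial_derivative_independent[OF T(1) S(2), where g = "\<lambda>t s. snd (F (s, t))"
            and j = "\<lambda>t s. J (s, t)"])
        (use partials that centres in auto)
    finally show ?thesis .
  qed
  moreover have "open (S \<times> T)" "y0 \<in> S \<times> T"
    using centres S T by (auto simp: y0 open_Times)
  ultimately show ?thesis
    unfolding eventually_nhds y0 by blast
qed

lemma proportional_derivative_locally_constant:
  fixes K F :: "real \<times> real \<Rightarrow> real \<times> real" and K' :: "real \<times> real \<Rightarrow> (real \<times> real) \<Rightarrow>\<^sub>L (real \<times> real)"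
  assumes "open W" "p0 \<in> W"
    and dK: "\<And>q. q \<in> W \<Longrightarrow> (K has_derivative blinfun_apply (K' q)) (at q)"
    and "continuous_on W K'" and "Kinv o\<^sub>L K' p0 = id_blinfun"
    and dF: "\<And>q. q \<in> W \<Longrightarrow> (F has_derivative (\<lambda>h. J q *\<^sub>R blinfun_apply (K' q) h)) (at q)"
  shows "\<forall>\<^sub>F q in nhds p0. J q = J p0"
proof -
  obtain W' V L L' where W': "open W'" "W' \<subseteq> W" "p0 \<in> W'" and V: "open V" "K p0 \<in> V"
    and hom: "homeomorphism W' V K L"
    and dL: "\<And>y. y \<in> V \<Longrightarrow> (L has_derivative L' y) (at y)"
    and L': "\<And>y. y \<in> V \<Longrightarrow> L' y = inv (blinfun_apply (K' (L y)))"
    and bij: "\<And>y. y \<in> V \<Longrightarrow> bij (blinfun_apply (K' (L y)))"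
    using inverse_function_theorem[OF assms(1) dK assms(4,2,5)] by metis
  have "((\<lambda>y. F (L y)) has_derivative (\<lambda>h. J (L y) *\<^sub>R h)) (at y)" if "y \<in> V" for y
  proof -
    have "L y \<in> W"
      using hom that W' unfolding homeomorphism_def by auto
    from has_derivative_compose[OF dL[OF that] dF[OF this]]
    show ?thesis
      using L'[OF that] bij[OF that] by (simp add: o_def bij_is_surj surj_f_inv_f)
  qed
  then have "\<forall>\<^sub>F y in nhds (K p0). J (L y) = J (L (K p0))"
    by (rule scaled_identity_derivative_locally_constant[OF V])
  moreover have "filterlim K (nhds (K p0)) (nhds p0)"
    using has_derivative_continuous[OF dK[OF \<open>p0 \<in> W\<close>]]
    by (simp add: isCont_def tendsto_at_iff_tendsto_nhds)
  ultimately have "\<forall>\<^sub>F q in nhds p0. J (L (K q)) = J (L (K p0))"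
    by (rule eventually_compose_filterlim)
  moreover have "\<forall>\<^sub>F q in nhds p0. q \<in> W'"
    using W' by (intro eventually_nhds_in_open)
  ultimately show ?thesis
    by eventually_elim (simp add: homeomorphism_apply1[OF hom] W'(3))
qed

definition blinfun_of_partials :: "'a::real_normed_vector \<Rightarrow> 'a \<Rightarrow> ((real \<times> real) \<Rightarrow>\<^sub>L 'a)" where
  "blinfun_of_partials a b = (blinfun_scaleR_left a o\<^sub>L fst_blinfun) + (blinfun_scaleR_left b o\<^sub>L snd_blinfun)"

lemma blinfun_of_partials_apply [simp]:
  "blinfun_apply (blinfun_of_partials a b) h = fst h *\<^sub>R a + snd h *\<^sub>R b"
  by (simp add: blinfun_of_partials_def blinfun.add_left)

lemma continuous_on_blinfun_of_partials [continuous_intros]: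
  "continuous_on W a \<Longrightarrow> continuous_on W b \<Longrightarrow> continuous_on W (\<lambda>q. blinfun_of_partials (a q) (b q))"
  unfolding blinfun_of_partials_def by (intro continuous_intros)

lemma connected_const_or_everywhere:
  fixes H :: "'a::topological_space \<Rightarrow> 'b::t1_space"
  assumes "open U" "connected U" and contH: "continuous_on U H"
    and alt: "\<And>p. p \<in> U \<Longrightarrow> H p = c \<or> Z p"
    and loc: "\<And>V p. open V \<Longrightarrow> V \<subseteq> U \<Longrightarrow> \<forall>q\<in>V. Z q \<Longrightarrow> p \<in> V \<Longrightarrow> \<forall>\<^sub>F q in nhds p. H q = H p"
  shows "(\<forall>p\<in>U. H p = c) \<or> (\<forall>p\<in>U. Z p)"
proof (rule disjCI)
  assume "\<not> (\<forall>p\<in>U. Z p)"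
  show "\<forall>p\<in>U. H p = c"
  proof (rule ccontr)
    assume "\<not> (\<forall>p\<in>U. H p = c)"
    then obtain p1 where "p1 \<in> U" "H p1 \<noteq> c"
      by blast
    have open_preimage: "open (U \<inter> H -` (- {d}))" for d
      using continuous_open_preimage[OF contH \<open>open U\<close>] by (simp add: open_Compl)
    define S where "S = {p \<in> U. H p = H p1}"
    have "open S"
      unfolding open_subopen[of S]
    proof
      fix p assume "p \<in> S"
      let ?V = "U \<inter> H -` (- {c})"
      have "p \<in> ?V" "\<forall>q\<in>?V. Z q"
        using \<open>p \<in> S\<close> \<open>H p1 \<noteq> c\<close> alt by (auto simp: S_def)
      then have "\<forall>\<^sub>F q in nhds p. H q = H p"
        by (intro loc[OF open_preimage]) auto
      moreover have "\<forall>\<^sub>F q in nhds p. q \<in> U"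
        using \<open>p \<in> S\<close> \<open>open U\<close> by (intro eventually_nhds_in_open) (auto simp: S_def)
      ultimately have "\<forall>\<^sub>F q in nhds p. q \<in> S"
        by eventually_elim (use \<open>p \<in> S\<close> in \<open>simp add: S_def\<close>)
      then show "\<exists>T. open T \<and> p \<in> T \<and> T \<subseteq> S"
        unfolding eventually_nhds by blast
    qed
    moreover have "S \<inter> (U \<inter> H -` (- {H p1})) \<inter> U = {}" "U \<subseteq> S \<union> (U \<inter> H -` (- {H p1}))"
      by (auto simp: S_def)
    ultimately have "S \<inter> U = {} \<or> (U \<inter> H -` (- {H p1})) \<inter> U = {}"
      by (rule connectedD[OF \<open>connected U\<close> _ open_preimage])
    then have "\<forall>p\<in>U. H p \<noteq> c"
      using \<open>p1 \<in> U\<close> \<open>H p1 \<noteq> c\<close> by (auto simp: S_def)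
    with alt \<open>\<not> (\<forall>p\<in>U. Z p)\<close> show False
      by blast
  qed
qed

section \<open>Conformal timelike immersions into anti-de Sitter space\<close>

locale conformal_timelike_immersion =
  fixes U :: "(real \<times> real) set"
    and \<phi> \<phi>u \<phi>v \<phi>uu \<phi>uv \<phi>vu \<phi>vv N Nu Nv :: "real \<times> real \<Rightarrow> real^4"
    and \<omega> :: "real \<times> real \<Rightarrow> real"
  assumes open_U: "open U"
    and d\<phi>: "\<And>p. p \<in> U \<Longrightarrow> (\<phi> has_derivative (\<lambda>h. fst h *\<^sub>R \<phi>u p + snd h *\<^sub>R \<phi>v p)) (at p)"
    and d\<phi>u: "\<And>p. p \<in> U \<Longrightarrow> (\<phi>u has_derivative (\<lambda>h. fst h *\<^sub>R \<phi>uu p + snd h *\<^sub>R \<phi>uv p)) (at p)"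
    and d\<phi>v: "\<And>p. p \<in> U \<Longrightarrow> (\<phi>v has_derivative (\<lambda>h. fst h *\<^sub>R \<phi>vu p + snd h *\<^sub>R \<phi>vv p)) (at p)"
    and cont_\<phi>uv: "continuous_on U \<phi>uv" and cont_\<phi>vu: "continuous_on U \<phi>vu"
    and dN: "\<And>p. p \<in> U \<Longrightarrow> (N has_derivative (\<lambda>h. fst h *\<^sub>R Nu p + snd h *\<^sub>R Nv p)) (at p)"
    and in_H: "\<And>p. p \<in> U \<Longrightarrow> \<phi> p \<in> H31"
    and null_u: "\<And>p. p \<in> U \<Longrightarrow> lor (\<phi>u p) (\<phi>u p) = 0"
    and null_v: "\<And>p. p \<in> U \<Longrightarrow> lor (\<phi>v p) (\<phi>v p) = 0"
    and conf: "\<And>p. p \<in> U \<Longrightarrow> lor (\<phi>u p) (\<phi>v p) = exp (\<omega> p) / 2"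
    and N_unit: "\<And>p. p \<in> U \<Longrightarrow> lor (N p) (N p) = 1"
    and N_perp: "\<And>p. p \<in> U \<Longrightarrow> lor (N p) (\<phi> p) = 0 \<and> lor (N p) (\<phi>u p) = 0 \<and> lor (N p) (\<phi>v p) = 0"
begin

definition H :: "real \<times> real \<Rightarrow> real" where "H p = 2 * exp (- \<omega> p) * lor (\<phi>uv p) (N p)"
definition Q :: "real \<times> real \<Rightarrow> real" where "Q p = lor (\<phi>uu p) (N p)"
definition R :: "real \<times> real \<Rightarrow> real" where "R p = lor (\<phi>vv p) (N p)"

lemma continuous_on_\<phi>u: "continuous_on U \<phi>u" and continuous_on_\<phi>v: "continuous_on U \<phi>v"
  and continuous_on_N: "continuous_on U N"
  by (rule continuous_at_imp_continuous_on, blast intro: has_derivative_continuous d\<phi>u d\<phi>v dN)+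

lemma mixed_partials: "p \<in> U \<Longrightarrow> \<phi>vu p = \<phi>uv p"
  using mixed_partials_eq_vec[OF open_U _ d\<phi> d\<phi>u d\<phi>v cont_\<phi>uv cont_\<phi>vu] by (rule sym)

lemma lor_null_combination:
  assumes "p \<in> U"
  shows "lor (a *\<^sub>R \<phi>u p + b *\<^sub>R \<phi>v p) (a *\<^sub>R \<phi>u p + b *\<^sub>R \<phi>v p) = a * b * exp (\<omega> p)"
  using null_u[OF assms] null_v[OF assms] conf[OF assms] lor_sym[of "\<phi>v p" "\<phi>u p"]
  by (simp add: lor_linear_simps algebra_simps)

lemma weingarten:
  assumes "p \<in> U"
  shows "Nu p = (- H p) *\<^sub>R \<phi>u p - (2 * Q p / exp (\<omega> p)) *\<^sub>R \<phi>v p"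
    and "Nv p = - (2 * R p / exp (\<omega> p)) *\<^sub>R \<phi>u p - H p *\<^sub>R \<phi>v p"
proof -
  define s where "s = exp (\<omega> p) / 2"
  note const = lor_const_partials[OF open_U \<open>p \<in> U\<close>]
  note derivs = d\<phi>[OF \<open>p \<in> U\<close>] d\<phi>u[OF \<open>p \<in> U\<close>] d\<phi>v[OF \<open>p \<in> U\<close>] dN[OF \<open>p \<in> U\<close>]
  have \<phi>\<phi>: "\<And>q. q \<in> U \<Longrightarrow> lor (\<phi> q) (\<phi> q) = -1"
    using in_H by (simp add: H31_def)
  have perp: "\<And>q. q \<in> U \<Longrightarrow> lor (N q) (\<phi> q) = 0" "\<And>q. q \<in> U \<Longrightarrow> lor (N q) (\<phi>u q) = 0"
    "\<And>q. q \<in> U \<Longrightarrow> lor (N q) (\<phi>v q) = 0"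
    using N_perp by simp_all
  have "lor (\<phi>u p) (\<phi> p) = 0" "lor (\<phi>v p) (\<phi> p) = 0"
    using const[OF \<phi>\<phi> derivs(1) derivs(1)] lor_sym[of "\<phi> p" "\<phi>u p"] lor_sym[of "\<phi> p" "\<phi>v p"]
    by simp_all
  then have "lor (\<phi> p) (\<phi> p) = -1" "lor (\<phi> p) (\<phi>u p) = 0" "lor (\<phi> p) (\<phi>v p) = 0" "lor (\<phi> p) (N p) = 0"
    "lor (\<phi>u p) (\<phi>u p) = 0" "lor (\<phi>v p) (\<phi>v p) = 0" "lor (\<phi>u p) (\<phi>v p) = s" "s \<noteq> 0"
    "lor (\<phi>u p) (N p) = 0" "lor (\<phi>v p) (N p) = 0" "lor (N p) (N p) = 1"
    using \<phi>\<phi> perp null_u null_v conf N_unit \<open>p \<in> U\<close> lor_sym[of "\<phi> p" "\<phi>u p"] lor_sym[of "\<phi> p" "\<phi>v p"]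
      lor_sym[of "\<phi> p" "N p"] lor_sym[of "\<phi>u p" "N p"] lor_sym[of "\<phi>v p" "N p"]
    by (simp_all add: s_def)
  note expand = lor_frame_expansion[OF this]
  have Hs: "lor (N p) (\<phi>uv p) = H p * s"
    by (simp add: H_def s_def lor_sym[of "N p" "\<phi>uv p"] exp_minus)
  have "lor (Nu p) (N p) = 0" "lor (Nv p) (N p) = 0"
    using const[OF N_unit derivs(4) derivs(4)] lor_sym[of "N p" "Nu p"] lor_sym[of "N p" "Nv p"]
    by simp_all
  moreover have "lor (Nu p) (\<phi> p) = 0" "lor (Nv p) (\<phi> p) = 0"
    using const[OF perp(1) derivs(4) derivs(1)] perp \<open>p \<in> U\<close> by simp_all
  moreover have "lor (Nu p) (\<phi>u p) = - Q p" "lor (Nv p) (\<phi>u p) = - H p * s"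
    using const[OF perp(2) derivs(4) derivs(2)] perp(2)[OF \<open>p \<in> U\<close>] Hs lor_sym[of "N p" "\<phi>uu p"]
    by (simp_all add: Q_def eq_neg_iff_add_eq_0)
  moreover have "lor (Nu p) (\<phi>v p) = - H p * s" "lor (Nv p) (\<phi>v p) = - R p"
    using const[OF perp(3) derivs(4) derivs(3)] perp(3)[OF \<open>p \<in> U\<close>] Hs lor_sym[of "N p" "\<phi>vv p"]
      mixed_partials[OF \<open>p \<in> U\<close>]
    by (simp_all add: R_def eq_neg_iff_add_eq_0)
  ultimately show "Nu p = (- H p) *\<^sub>R \<phi>u p - (2 * Q p / exp (\<omega> p)) *\<^sub>R \<phi>v p"
    and "Nv p = - (2 * R p / exp (\<omega> p)) *\<^sub>R \<phi>u p - H p *\<^sub>R \<phi>v p"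
    using expand[of "Nu p"] expand[of "Nv p"] by (simp_all add: s_def)
qed

lemma lor_parallel_partials:
  assumes "p \<in> U"
  shows "lor (\<phi>u p + c *\<^sub>R Nu p) (\<phi>u p + c *\<^sub>R Nu p) = - 2 * c * (1 - c * H p) * Q p"
    and "lor (\<phi>v p + c *\<^sub>R Nv p) (\<phi>v p + c *\<^sub>R Nv p) = - 2 * c * (1 - c * H p) * R p"
proof -
  have "\<phi>u p + c *\<^sub>R Nu p = (1 - c * H p) *\<^sub>R \<phi>u p + (- 2 * c * Q p / exp (\<omega> p)) *\<^sub>R \<phi>v p"
    and "\<phi>v p + c *\<^sub>R Nv p = (- 2 * c * R p / exp (\<omega> p)) *\<^sub>R \<phi>u p + (1 - c * H p) *\<^sub>R \<phi>v p"
    by (simp_all add: weingarten[OF assms] algebra_simps)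
  then show "lor (\<phi>u p + c *\<^sub>R Nu p) (\<phi>u p + c *\<^sub>R Nu p) = - 2 * c * (1 - c * H p) * Q p"
    and "lor (\<phi>v p + c *\<^sub>R Nv p) (\<phi>v p + c *\<^sub>R Nv p) = - 2 * c * (1 - c * H p) * R p"
    by (simp_all only: lor_null_combination[OF assms]) (simp_all add: field_simps)
qed

(* \<omega> is not assumed continuous, so H is written with e\<^sup>\<omega> = 2 lor \<phi>\<^sub>u \<phi>\<^sub>v. *)

lemma continuous_on_H: "continuous_on U H"
proof (rule continuous_on_eq)
  have "\<forall>p\<in>U. lor (\<phi>u p) (\<phi>v p) \<noteq> 0"
    by (simp add: conf)
  then show "continuous_on U (\<lambda>p. lor (\<phi>uv p) (N p) / lor (\<phi>u p) (\<phi>v p))"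
    by (intro continuous_intros lor.continuous_on cont_\<phi>uv continuous_on_N
        continuous_on_\<phi>u continuous_on_\<phi>v)
  show "lor (\<phi>uv p) (N p) / lor (\<phi>u p) (\<phi>v p) = H p" if "p \<in> U" for p
    by (simp add: H_def conf[OF that] exp_minus field_simps)
qed

lemma H_locally_constant_on_umbilic:
  assumes "open V" "V \<subseteq> U" and umbilic: "\<forall>q\<in>V. Q q = 0 \<and> R q = 0" and "p0 \<in> V"
  shows "\<forall>\<^sub>F q in nhds p0. H q = H p0"
proof -
  define s where "s = exp (\<omega> p0) / 2"
  define P where "P x = (lor x ((1 / s) *\<^sub>R \<phi>v p0), lor x ((1 / s) *\<^sub>R \<phi>u p0))" for x
  have "bounded_linear P"
    unfolding P_def by (intro bounded_linear_Pair lor.bounded_linear_left)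
  then interpret P: bounded_linear P .
  have "p0 \<in> U"
    using assms by blast
  have P0: "P (\<phi>u p0) = (1, 0)" "P (\<phi>v p0) = (0, 1)"
    using null_u[OF \<open>p0 \<in> U\<close>] null_v[OF \<open>p0 \<in> U\<close>] conf[OF \<open>p0 \<in> U\<close>] lor_sym[of "\<phi>v p0" "\<phi>u p0"]
    by (simp_all add: P_def s_def lor_linear_simps)
  define K' where "K' q = blinfun_of_partials (P (\<phi>u q)) (P (\<phi>v q))" for q
  have "\<forall>\<^sub>F q in nhds p0. - H q = - H p0"
  proof (rule proportional_derivative_locally_constant[OF \<open>open V\<close> \<open>p0 \<in> V\<close>])
    show "((\<lambda>q. P (\<phi> q)) has_derivative blinfun_apply (K' q)) (at q)" if "q \<in> V" for q
      using that \<open>V \<subseteq> U\<close>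
      by (intro has_derivative_eq_rhs[OF P.has_derivative[OF d\<phi>]]) (auto simp: K'_def P.add P.scaleR)
    show "continuous_on V K'"
      unfolding K'_def using \<open>V \<subseteq> U\<close>
      by (intro continuous_intros P.continuous_on continuous_on_subset[OF continuous_on_\<phi>u]
          continuous_on_subset[OF continuous_on_\<phi>v])
    show "id_blinfun o\<^sub>L K' p0 = id_blinfun"
      by (rule blinfun_eqI) (simp add: K'_def P0)
    show "((\<lambda>q. P (N q)) has_derivative (\<lambda>h. - H q *\<^sub>R blinfun_apply (K' q) h)) (at q)" if "q \<in> V" for q
    proof -
      have "q \<in> U"
        using that \<open>V \<subseteq> U\<close> by blast
      then have "Nu q = - H q *\<^sub>R \<phi>u q" "Nv q = - H q *\<^sub>R \<phi>v q"
        using weingarten[OF \<open>q \<in> U\<close>] umbilic that by auto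
      then show ?thesis
        by (intro has_derivative_eq_rhs[OF P.has_derivative[OF dN[OF \<open>q \<in> U\<close>]]])
          (simp add: K'_def fun_eq_iff P.add P.diff P.neg P.scaleR algebra_simps)
    qed
  qed
  then show ?thesis
    by simp
qed

lemma parallel_conformal_iff:
  assumes "connected U" "c \<noteq> 0"
  shows "conformal_rel U (\<lambda>p. \<phi>u p + c *\<^sub>R Nu p) (\<lambda>p. \<phi>v p + c *\<^sub>R Nv p) \<phi>u \<phi>v
    \<longleftrightarrow> (\<forall>p\<in>U. H p = 1 / c) \<or> (\<forall>p\<in>U. Q p = 0 \<and> R p = 0)"
proof -
  have "conformal_rel U (\<lambda>p. \<phi>u p + c *\<^sub>R Nu p) (\<lambda>p. \<phi>v p + c *\<^sub>R Nv p) \<phi>u \<phi>v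
      \<longleftrightarrow> (\<forall>p\<in>U. (1 - c * H p) * Q p = 0 \<and> (1 - c * H p) * R p = 0)"
    by (subst conformal_rel_iff_null) (simp_all add: null_u null_v conf lor_parallel_partials \<open>c \<noteq> 0\<close>)
  also have "\<dots> \<longleftrightarrow> (\<forall>p\<in>U. H p = 1 / c \<or> (Q p = 0 \<and> R p = 0))"
  proof -
    have "1 - c * H p = 0 \<longleftrightarrow> H p = 1 / c" for p
      using \<open>c \<noteq> 0\<close> by (auto simp: field_simps)
    then show ?thesis
      by (simp only: mult_eq_0_iff) blast
  qed
  also have "\<dots> \<longleftrightarrow> (\<forall>p\<in>U. H p = 1 / c) \<or> (\<forall>p\<in>U. Q p = 0 \<and> R p = 0)"
  proof
    assume "\<forall>p\<in>U. H p = 1 / c \<or> (Q p = 0 \<and> R p = 0)"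
    then show "(\<forall>p\<in>U. H p = 1 / c) \<or> (\<forall>p\<in>U. Q p = 0 \<and> R p = 0)"
      by (intro connected_const_or_everywhere[OF open_U \<open>connected U\<close> continuous_on_H _
            H_locally_constant_on_umbilic]) simp_all
  qed auto
  finally show ?thesis .
qed

end

theorem proposition10p1:
  fixes U :: "(real \<times> real) set"
    and \<phi> \<phi>u \<phi>v \<phi>uu \<phi>uv \<phi>vu \<phi>vv N Nu Nv :: "real \<times> real \<Rightarrow> real^4"
    and \<omega> :: "real \<times> real \<Rightarrow> real"
  assumes U: "open U" "connected U"
    and d\<phi>: "\<And>p. p \<in> U \<Longrightarrow> (\<phi> has_derivative (\<lambda>h. fst h *\<^sub>R \<phi>u p + snd h *\<^sub>R \<phi>v p)) (at p)"
    and d\<phi>u: "\<And>p. p \<in> U \<Longrightarrow> (\<phi>u has_derivative (\<lambda>h. fst h *\<^sub>R \<phi>uu p + snd h *\<^sub>R \<phi>uv p)) (at p)"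
    and d\<phi>v: "\<And>p. p \<in> U \<Longrightarrow> (\<phi>v has_derivative (\<lambda>h. fst h *\<^sub>R \<phi>vu p + snd h *\<^sub>R \<phi>vv p)) (at p)"
    and C2: "continuous_on U \<phi>uu" "continuous_on U \<phi>uv" "continuous_on U \<phi>vu" "continuous_on U \<phi>vv"
    and dN: "\<And>p. p \<in> U \<Longrightarrow> (N has_derivative (\<lambda>h. fst h *\<^sub>R Nu p + snd h *\<^sub>R Nv p)) (at p)"
    and in_H: "\<And>p. p \<in> U \<Longrightarrow> \<phi> p \<in> H31"
    and null_u: "\<And>p. p \<in> U \<Longrightarrow> lor (\<phi>u p) (\<phi>u p) = 0"
    and null_v: "\<And>p. p \<in> U \<Longrightarrow> lor (\<phi>v p) (\<phi>v p) = 0"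
    and conf: "\<And>p. p \<in> U \<Longrightarrow> lor (\<phi>u p) (\<phi>v p) = exp (\<omega> p) / 2"
    and N_unit: "\<And>p. p \<in> U \<Longrightarrow> lor (N p) (N p) = 1"
    and N_perp: "\<And>p. p \<in> U \<Longrightarrow> lor (N p) (\<phi> p) = 0 \<and> lor (N p) (\<phi>u p) = 0 \<and> lor (N p) (\<phi>v p) = 0"
  defines "H \<equiv> (\<lambda>p. 2 * exp (- \<omega> p) * lor (\<phi>uv p) (N p))"
    and "Q \<equiv> (\<lambda>p. lor (\<phi>uu p) (N p))"
    and "R \<equiv> (\<lambda>p. lor (\<phi>vv p) (N p))"
  shows "(conformal_rel U (\<lambda>p. \<phi>u p + Nu p) (\<lambda>p. \<phi>v p + Nv p) \<phi>u \<phi>v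
            \<longleftrightarrow> (\<forall>p\<in>U. H p = 1) \<or> (\<forall>p\<in>U. Q p = 0 \<and> R p = 0))
       \<and> (conformal_rel U (\<lambda>p. \<phi>u p - Nu p) (\<lambda>p. \<phi>v p - Nv p) \<phi>u \<phi>v
            \<longleftrightarrow> (\<forall>p\<in>U. H p = -1) \<or> (\<forall>p\<in>U. Q p = 0 \<and> R p = 0))"
proof -
  interpret surface: conformal_timelike_immersion U \<phi> \<phi>u \<phi>v \<phi>uu \<phi>uv \<phi>vu \<phi>vv N Nu Nv \<omega>
    by unfold_locales (use assms in auto)
  have "H = surface.H" "Q = surface.Q" "R = surface.R"
    by (simp_all add: fun_eq_iff H_def Q_def R_def surface.H_def surface.Q_def surface.R_def)
  then show ?thesis
    using surface.parallel_conformal_iff[OF U(2), of 1] surface.parallel_conformal_iff[OF U(2), of "-1"]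
    by simp
qed

end
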